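(* Let $n,m,j,k$ be positive integers with $m\leq2^{n+1}$ and $j,k\leq\left\lfloor\frac{m+1}{4}\right\rfloor$. Then the equation $$(1-2^n)x+(2j-1)2^y=(2k-1)2^z$$ has no integer solutions with $x>0$, $0\leq y<\left\lfloor\log_2\left(\frac{m-1}{2j-1}\right)\right\rfloor$, and $z\geq0$. *)

theory Defs
  imports Complex_Main
begin

end

theory Submission
  imports Defs
begin

text \<open>The bound on \<open>y\<close> gives \<open>(2j - 1) 2^(y+1) \<le> m - 1 < 2^(n+1)\<close>, i.e.
  \<open>(2j - 1) 2^y \<le> 2^n - 1\<close>. Since \<open>x \<ge> 1\<close>, the left-hand side of the equation is then
  at most \<open>(2j - 1) 2^y - (2^n - 1) \<le> 0\<close>, while the right-hand side is a positive integer.\<close>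

lemma power_Suc_le_of_less_floor_log:
  fixes b A :: real and y :: int
  assumes "1 < b" "0 < A" "0 \<le> y" "y < \<lfloor>log b A\<rfloor>"
  shows "b ^ (nat y + 1) \<le> A"
proof -
  have "real (nat y + 1) \<le> log b A"
    using assms(3,4) by (simp add: le_floor_iff flip: add1_zle_eq)
  then have "b powr real (nat y + 1) \<le> A"
    using assms(1,2) by (simp add: le_log_iff)
  then show ?thesis
    using assms(1) by (simp only: powr_realpow)
qed

lemma Mersenne_multiple_plus_small_less:
  fixes x a c :: int
  assumes "0 < x" "a < 2 ^ n" "0 < c"
  shows "(1 - 2 ^ n) * x + a < c"
proof -
  have "(2 ^ n - 1) * 1 \<le> (2 ^ n - 1) * x"
    using assms(1) by (intro mult_left_mono) simp_all
  then show ?thesis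
    using assms(2,3) by (simp add: algebra_simps)
qed

theorem lemma4p5:
  fixes n m j k :: nat
  assumes "n > 0" "m > 0" "j > 0" "k > 0"
    and "m \<le> 2 ^ (n + 1)"
    and "int j \<le> \<lfloor>(real m + 1) / 4\<rfloor>"
    and "int k \<le> \<lfloor>(real m + 1) / 4\<rfloor>"
  shows "\<not> (\<exists>(x::int) (y::int) (z::int).
            x > 0 \<and> 0 \<le> y \<and> y < \<lfloor>log 2 ((real m - 1) / (2 * real j - 1))\<rfloor> \<and> z \<ge> 0 \<and>
            (1 - 2 ^ n) * x + (2 * int j - 1) * 2 ^ nat y = (2 * int k - 1) * 2 ^ nat z)"
proof
  assume "\<exists>(x::int) (y::int) (z::int).
            x > 0 \<and> 0 \<le> y \<and> y < \<lfloor>log 2 ((real m - 1) / (2 * real j - 1))\<rfloor> \<and> z \<ge> 0 \<and>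
            (1 - 2 ^ n) * x + (2 * int j - 1) * 2 ^ nat y = (2 * int k - 1) * 2 ^ nat z"
  then obtain x y z :: int where x: "x > 0" and y: "0 \<le> y"
    "y < \<lfloor>log 2 ((real m - 1) / (2 * real j - 1))\<rfloor>"
    and eq: "(1 - 2 ^ n) * x + (2 * int j - 1) * 2 ^ nat y = (2 * int k - 1) * 2 ^ nat z"
    by blast
  have odd_j: "0 < 2 * real j - 1"
    using assms(3) by simp
  have "4 * real j \<le> real m + 1"
    using assms(6) by (simp add: le_floor_iff)
  then have "0 < (real m - 1) / (2 * real j - 1)"
    using assms(3) odd_j by simp
  then have "2 ^ (nat y + 1) * (2 * real j - 1) \<le> real m - 1"
    using power_Suc_le_of_less_floor_log[OF _ _ y] odd_j by (simp add: pos_le_divide_eq)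
  also have "\<dots> < 2 ^ (n + 1)"
    using assms(5) of_nat_le_iff[of m "2 ^ (n + 1)", where 'a=real] by simp
  finally have "real_of_int ((2 * int j - 1) * 2 ^ nat y) < real_of_int (2 ^ n)"
    by (simp add: mult.commute)
  then have "(2 * int j - 1) * 2 ^ nat y < 2 ^ n"
    by (simp only: of_int_less_iff)
  moreover have "0 < (2 * int k - 1) * 2 ^ nat z"
    using assms(4) by simp
  ultimately show False
    using Mersenne_multiple_plus_small_less[OF x] eq by (metis less_irrefl)
qed

end
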